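(* Let $m\ge1$ and let $\mathbf z=(z_1,\dots,z_m)$ be a sequence of non-negative integers with at most one even entry. Then $\rho^{m+1}(\mathbf z)=(z_1+2,\dots,z_m+2)$, where $\rho=\rho_m$ is the right rotation.
   Context: Let $\mathcal Z_m$ be the set of $m$-tuples of integers with at most one even entry. The right rotation $\rho:\mathcal Z_m\to\mathcal Z_m$ is defined by: if $z_2,\dots,z_m$ are all odd, $\rho(z_1,\dots,z_m)=(z_2,\dots,z_m,z_1+1)$; if $z_v$ is even for some $v>1$, $\rho(z_1,\dots,z_m)=(z_2,\dots,z_{v-1},z_1+1,z_{v+1},\dots,z_m,z_v+1)$ (i.e. the entry $z_1+1$ is placed at position $v-1$ and $z_v+1$ at the end). For $m=1$, $\rho(z)=z+1$. *)

theory Defs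
  imports Main
begin

definition Zset :: "nat \<Rightarrow> int list set" where
  "Zset m = {z. length z = m \<and> card {i. i < m \<and> even (z ! i)} \<le> 1}"

text \<open>For z = z1 # rest: if all entries of rest are odd,
  the result is rest @ [z1+1]; otherwise, with j the (0-based) index in rest of
  the even entry z_v (v = j + 2), z1+1 is placed at position v-1 and z_v+1 at the end.\<close>

fun rho :: "int list \<Rightarrow> int list" where
  "rho [] = []"
| "rho (z1 # rest) =
     (if (\<forall>x\<in>set rest. odd x) then rest @ [z1 + 1]
      else (let j = (LEAST j. j < length rest \<and> even (rest ! j))
            in take j rest @ [z1 + 1] @ drop (Suc j) rest @ [rest ! j + 1]))"

end

theory Submission
  imports Defs
begin

text \<open>One step of \<open>\<rho>\<close> removes the head \<open>x\<close>. If the tail is all odd, \<open>x + 1\<close> is appended;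
  otherwise \<open>x + 1\<close> takes the slot of the unique even entry \<open>e\<close> and \<open>e + 1\<close> is appended.
  Hence, while a block of odd heads is consumed, all of them but the last are appended
  increased by 2, and the last one, increased by 1, becomes the new even entry.
  Splitting \<open>z\<close> at its even entry (if any) and composing such blocks gives exactly
  \<open>m + 1\<close> steps. Nonnegativity of the entries plays no role.\<close>

lemma rho_Cons_odd_tail:
  assumes "\<forall>y\<in>set rest. odd y"
  shows "rho (x # rest) = rest @ [x + 1]"
  using assms by simp

lemma rho_Cons_even_entry:
  assumes "\<forall>y\<in>set xs. odd y" and "even e"
  shows "rho (x # xs @ e # ys) = xs @ (x + 1) # ys @ [e + 1]"
proof -
  have first_even: "(LEAST j. j < length (xs @ e # ys) \<and> even ((xs @ e # ys) ! j)) = length xs"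
  proof (rule Least_equality)
    fix j assume "j < length (xs @ e # ys) \<and> even ((xs @ e # ys) ! j)"
    then show "length xs \<le> j"
      using assms(1) by (metis leI nth_append nth_mem)
  qed (use assms(2) in simp)
  have "\<not> (\<forall>y\<in>set (xs @ e # ys). odd y)"
    using assms(2) by auto
  then show ?thesis
    by (simp only: rho.simps if_False Let_def first_even) simp
qed

lemma funpow_rho_odd_prefix:
  assumes "\<forall>y\<in>set as. odd y" and "odd x" and "\<forall>y\<in>set ps. odd y"
    and "\<forall>y\<in>set ys. odd y" and "even e"
  shows "(rho ^^ Suc (length as)) (as @ x # ps @ e # ys)
    = ps @ (x + 1) # ys @ (e + 1) # map (\<lambda>y. y + 2) as"
  using assms
proof (induction as arbitrary: e ys)
  case Nil
  then show ?case
    using rho_Cons_even_entry[of ps e x ys] by simp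
next
  case (Cons a as)
  have "\<forall>y\<in>set (as @ x # ps). odd y"
    using Cons.prems by auto
  then have "rho (a # as @ x # ps @ e # ys) = as @ x # ps @ (a + 1) # ys @ [e + 1]"
    using rho_Cons_even_entry[of "as @ x # ps" e a ys] Cons.prems(5) by (simp del: rho.simps)
  moreover have "(rho ^^ Suc (length as)) (as @ x # ps @ (a + 1) # ys @ [e + 1])
      = ps @ (x + 1) # (ys @ [e + 1]) @ (a + 2) # map (\<lambda>y. y + 2) as"
    using Cons.IH[where e = "a + 1" and ys = "ys @ [e + 1]"] Cons.prems by (simp add: add.assoc)
  ultimately show ?case
    by (simp only: funpow_Suc_right o_apply length_Cons) simp
qed

lemma funpow_rho_all_odd:
  assumes "\<forall>y\<in>set (ys @ c # R). odd y"
  shows "(rho ^^ Suc (length ys)) (ys @ c # R) = R @ (c + 1) # map (\<lambda>y. y + 2) ys"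
proof (cases ys)
  case Nil
  then show ?thesis
    using assms by simp
next
  case (Cons y ys')
  have "rho (ys @ c # R) = ys' @ c # R @ [y + 1]"
    using assms Cons by simp
  moreover have "(rho ^^ Suc (length ys')) (ys' @ c # R @ [y + 1])
      = R @ (c + 1) # (y + 2) # map (\<lambda>y. y + 2) ys'"
    using funpow_rho_odd_prefix[of ys' c R "[]" "y + 1"] assms Cons by (simp add: add.assoc)
  ultimately show ?thesis
    using Cons by (simp only: funpow_Suc_right o_apply length_Cons) simp
qed

lemma funpow_rho_cycle_all_odd:
  assumes "\<forall>y\<in>set z. odd y" and "z \<noteq> []"
  shows "(rho ^^ Suc (length z)) z = map (\<lambda>y. y + 2) z"
proof -
  obtain ys c where z: "z = ys @ [c]"
    using assms(2) by (cases z rule: rev_cases) auto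
  have "(rho ^^ length z) z = (c + 1) # map (\<lambda>y. y + 2) ys"
    using funpow_rho_all_odd[of ys c "[]"] assms(1) z by simp
  then show ?thesis
    using assms(1) z by (simp add: add.assoc)
qed

lemma funpow_rho_cycle_one_even:
  assumes "\<forall>y\<in>set xs. odd y" and "even e" and "\<forall>y\<in>set ys. odd y"
  shows "(rho ^^ Suc (length (xs @ e # ys))) (xs @ e # ys) = map (\<lambda>y. y + 2) (xs @ e # ys)"
proof (cases xs rule: rev_cases)
  case Nil
  have "(rho ^^ Suc (length (xs @ e # ys))) (xs @ e # ys) = (rho ^^ Suc (length ys)) (rho (e # ys))"
    using Nil by (simp del: funpow.simps add: funpow_Suc_right)
  also have "rho (e # ys) = ys @ [e + 1]"
    using assms(3) by simp
  also have "(rho ^^ Suc (length ys)) (ys @ [e + 1]) = (e + 2) # map (\<lambda>y. y + 2) ys"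
    using funpow_rho_all_odd[of ys "e + 1" "[]"] assms by (simp add: add.assoc)
  finally show ?thesis
    using Nil by simp
next
  case (snoc xs' x)
  let ?w = "map (\<lambda>y. y + 2) xs' @ [x + 2]"
  have odd_tail: "\<forall>y\<in>set (ys @ (e + 1) # map (\<lambda>y. y + 2) xs'). odd y"
    and odd_w: "\<forall>y\<in>set (ys @ (e + 1) # ?w). odd y"
    using assms snoc by auto
  have "(rho ^^ Suc (length (xs @ e # ys))) (xs @ e # ys)
      = (rho ^^ Suc (length ys)) (rho ((rho ^^ length xs) (xs @ e # ys)))"
  proof -
    have "Suc (length (xs @ e # ys)) = Suc (length ys) + Suc (length xs)"
      by simp
    then show ?thesis
      by (simp only: funpow_add funpow.simps(2) o_apply)
  qed
  also have "(rho ^^ length xs) (xs @ e # ys) = (x + 1) # ys @ (e + 1) # map (\<lambda>y. y + 2) xs'"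
    using funpow_rho_odd_prefix[of xs' x "[]" ys e] assms snoc by simp
  also have "rho \<dots> = ys @ (e + 1) # ?w"
    using rho_Cons_odd_tail[OF odd_tail, of "x + 1"] by (simp add: add.assoc)
  also have "(rho ^^ Suc (length ys)) \<dots> = ?w @ (e + 2) # map (\<lambda>y. y + 2) ys"
    using funpow_rho_all_odd[OF odd_w] by (simp add: add.assoc)
  finally show ?thesis
    using snoc by simp
qed

lemma Zset_cases:
  assumes "z \<in> Zset m"
  obtains "\<forall>y\<in>set z. odd y"
  | xs e ys where "z = xs @ e # ys" and "\<forall>y\<in>set xs. odd y" and "even e" and "\<forall>y\<in>set ys. odd y"
proof (cases "\<forall>y\<in>set z. odd y")
  case False
  have len: "length z = m" and card_even: "card {i. i < m \<and> even (z ! i)} \<le> 1"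
    using assms unfolding Zset_def by auto
  obtain i where i: "i < m" "even (z ! i)"
    using False len by (auto simp: in_set_conv_nth)
  have odd_other: "odd (z ! j)" if "j < m" "j \<noteq> i" for j
  proof (rule ccontr)
    assume "\<not> odd (z ! j)"
    then have "card {i, j} \<le> card {i. i < m \<and> even (z ! i)}"
      using i that by (intro card_mono) auto
    with card_even that show False by simp
  qed
  show thesis
  proof (rule that(2))
    show "z = take i z @ z ! i # drop (Suc i) z"
      using i len by (simp add: id_take_nth_drop)
    show "\<forall>y\<in>set (take i z). odd y" "\<forall>y\<in>set (drop (Suc i) z). odd y"
      using odd_other i len by (auto simp: in_set_conv_nth)
  qed (use i in simp)
qed

theorem lemma4p4:
  fixes m :: nat and z :: "int list"
  assumes "m \<ge> 1"
    and "z \<in> Zset m"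
    and "\<forall>i<m. z ! i \<ge> 0"
  shows "(rho ^^ (m + 1)) z = map (\<lambda>x. x + 2) z"
proof -
  have len: "length z = m"
    using assms(2) unfolding Zset_def by simp
  from assms(2) show ?thesis
  proof (cases rule: Zset_cases)
    case 1
    moreover have "z \<noteq> []"
      using assms(1) len by auto
    ultimately show ?thesis
      using funpow_rho_cycle_all_odd[of z] len by simp
  next
    case (2 xs e ys)
    then show ?thesis
      using funpow_rho_cycle_one_even[of xs e ys] len by (simp del: funpow.simps)
  qed
qed

end
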